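(* Let $n \ge 0$ and let $\mathcal{A}$ be a UFA with $n$ states over a finite alphabet $\Sigma$ that recognizes a language $L \subseteq \Sigma^*$. Then there exists a UFA with at most $\sqrt{n+1} \cdot 2^{n/2}$ states that recognizes the language $\Sigma^* \setminus L$.
   Context: An NFA is a quintuple $\mathcal{A} = (Q,\Sigma,\delta,I,F)$ with $Q$ a finite set of states, $\Sigma$ a finite alphabet, $\delta \subseteq Q \times \Sigma \times Q$ the transition relation, $I \subseteq Q$ the initial states and $F \subseteq Q$ the accepting states. A run on $w = a_1\cdots a_m$ is a sequence $q_0 \xrightarrow{a_1} q_1 \cdots \xrightarrow{a_m} q_m$ with $(q_{i-1},a_i,q_i)\in\delta$; it is accepting if $q_0 \in I$ and $q_m \in F$. $L(\mathcal{A})$ is the set of words having an accepting run. A UFA (unambiguous finite automaton) is an NFA in which every word $w \in \Sigma^*$ has at most one accepting run. A UFA recognizes $L$ if $L(\mathcal{A}) = L$. *)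

theory Defs
  imports Complex_Main
begin

record ('q, 'a) nfa =
  states :: "'q set"
  alphabet :: "'a set"
  trans :: "('q \<times> 'a \<times> 'q) set"
  init :: "'q set"
  final :: "'q set"

definition wf_nfa :: "('q, 'a) nfa \<Rightarrow> bool" where
  "wf_nfa A \<longleftrightarrow> finite (states A) \<and> finite (alphabet A)
     \<and> trans A \<subseteq> states A \<times> alphabet A \<times> states A
     \<and> init A \<subseteq> states A \<and> final A \<subseteq> states A"

definition is_run :: "('q, 'a) nfa \<Rightarrow> 'a list \<Rightarrow> 'q list \<Rightarrow> bool" where
  "is_run A w qs \<longleftrightarrow> length qs = Suc (length w)
     \<and> (\<forall>i < length w. (qs ! i, w ! i, qs ! Suc i) \<in> trans A)"

definition accepting_run :: "('q, 'a) nfa \<Rightarrow> 'a list \<Rightarrow> 'q list \<Rightarrow> bool" where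
  "accepting_run A w qs \<longleftrightarrow> is_run A w qs \<and> hd qs \<in> init A \<and> last qs \<in> final A"

definition lang :: "('q, 'a) nfa \<Rightarrow> 'a list set" where
  "lang A = {w. w \<in> lists (alphabet A) \<and> (\<exists>qs. accepting_run A w qs)}"

definition ufa :: "('q, 'a) nfa \<Rightarrow> bool" where
  "ufa A \<longleftrightarrow> wf_nfa A \<and>
     (\<forall>w \<in> lists (alphabet A). \<forall>qs qs'. accepting_run A w qs \<and> accepting_run A w qs' \<longrightarrow> qs = qs')"

end

theory Submission
  imports Defs
begin

(* Call a set of states reachable if it is the set of states reached from the initial states
   by some word, and co-reachable if it is the set of states from which some word leads to a
   final state. The subset construction restricted to reachable sets, with the sets avoiding
   the final states as accepting states, is a DFA for the complement; the same construction on
   the reversed automaton, reversed back, is an unambiguous automaton for the complement whose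
   states are the co-reachable sets. In a UFA a reachable set and a co-reachable set share at
   most one state (two shared states would give two accepting runs of one word). So in the
   graph joining two states that lie in a common reachable set, the reachable sets are cliques
   and the co-reachable sets are independent sets; in any graph on n vertices the numbers of
   cliques and of independent sets have product at most (n + 1) 2^n, by induction on n after
   splitting off one vertex. The smaller of the two automata thus has at most
   sqrt ((n + 1) 2^n) states. *)

definition cliques :: "('v \<Rightarrow> 'v \<Rightarrow> bool) \<Rightarrow> 'v set \<Rightarrow> 'v set set" where
  "cliques R S = {X. X \<subseteq> S \<and> (\<forall>u\<in>X. \<forall>w\<in>X. u \<noteq> w \<longrightarrow> R u w)}"

lemma cliques_empty [simp]: "cliques R {} = {{}}"
  by (auto simp: cliques_def)

lemma finite_cliques: "finite S \<Longrightarrow> finite (cliques R S)"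
  by (rule finite_subset[of _ "Pow S"]) (auto simp: cliques_def)

lemma card_cliques_le: "finite S \<Longrightarrow> card (cliques R S) \<le> 2 ^ card S"
  by (metis (no_types, lifting) card_Pow card_mono cliques_def finite_Pow_iff mem_Collect_eq
      PowI subsetI)

lemma card_cliques_Un_le:
  assumes "finite A" "finite B"
  shows "card (cliques R (A \<union> B)) \<le> card (cliques R A) * card (cliques R B)"
proof -
  have "cliques R (A \<union> B) \<subseteq> (\<lambda>(X, Y). X \<union> Y) ` (cliques R A \<times> cliques R B)"
  proof
    fix X assume "X \<in> cliques R (A \<union> B)"
    then have "X = (X \<inter> A) \<union> (X \<inter> B)" "(X \<inter> A, X \<inter> B) \<in> cliques R A \<times> cliques R B"
      by (auto simp: cliques_def)
    then show "X \<in> (\<lambda>(X, Y). X \<union> Y) ` (cliques R A \<times> cliques R B)"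
      by (intro image_eqI[of X _ "(X \<inter> A, X \<inter> B)"]) simp_all
  qed
  then have "card (cliques R (A \<union> B)) \<le> card ((\<lambda>(X, Y). X \<union> Y) ` (cliques R A \<times> cliques R B))"
    using assms by (intro card_mono finite_imageI finite_cartesian_product finite_cliques)
  also have "\<dots> \<le> card (cliques R A \<times> cliques R B)"
    using assms by (intro card_image_le finite_cartesian_product finite_cliques)
  finally show ?thesis
    by (simp add: card_cartesian_product)
qed

lemma card_cliques_le_remove:
  assumes "finite S"
  shows "card (cliques R S) \<le> card (cliques R (S - {v})) + card (cliques R {u \<in> S - {v}. R u v})"
proof -
  let ?P = "{u \<in> S - {v}. R u v}"
  have "cliques R S \<subseteq> cliques R (S - {v}) \<union> insert v ` cliques R ?P"
  proof
    fix X assume X: "X \<in> cliques R S"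
    show "X \<in> cliques R (S - {v}) \<union> insert v ` cliques R ?P"
    proof (cases "v \<in> X")
      case True
      then have "X = insert v (X - {v})" "X - {v} \<in> cliques R ?P"
        using X by (auto simp: cliques_def)
      then show ?thesis by blast
    qed (use X in \<open>auto simp: cliques_def\<close>)
  qed
  then have "card (cliques R S) \<le> card (cliques R (S - {v}) \<union> insert v ` cliques R ?P)"
    using assms by (intro card_mono finite_UnI finite_imageI finite_cliques) auto
  also have "\<dots> \<le> card (cliques R (S - {v})) + card (insert v ` cliques R ?P)"
    by (rule card_Un_le)
  also have "\<dots> \<le> card (cliques R (S - {v})) + card (cliques R ?P)"
    using assms by (simp add: card_image_le finite_cliques)
  finally show ?thesis .
qed

text \<open>The arithmetic of the induction step: S consists of a vertex v, its predecessors N with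
  |N| = k and its non-predecessors M with |M| = l; c and d count the cliques and the independent
  sets of S - {v}.\<close>
lemma clique_count_step:
  fixes c c\<^sub>N c\<^sub>M d d\<^sub>N d\<^sub>M k l :: nat
  assumes "c \<le> c\<^sub>N * c\<^sub>M" and "d \<le> d\<^sub>N * d\<^sub>M"
    and "c * d \<le> (k + l + 1) * 2 ^ (k + l)"
    and "c\<^sub>N * d\<^sub>N \<le> (k + 1) * 2 ^ k" and "c\<^sub>M * d\<^sub>M \<le> (l + 1) * 2 ^ l"
    and "c\<^sub>N \<le> 2 ^ k" and "d\<^sub>M \<le> 2 ^ l"
  shows "(c + c\<^sub>N) * (d + d\<^sub>M) \<le> (k + l + 2) * 2 ^ (k + l + 1)"
proof -
  have "c * d\<^sub>M \<le> c\<^sub>N * (c\<^sub>M * d\<^sub>M)"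
    using assms(1) by (metis mult.assoc mult_le_mono1)
  also have "\<dots> \<le> 2 ^ k * ((l + 1) * 2 ^ l)"
    using assms(6,5) by (rule mult_le_mono)
  also have "\<dots> = (l + 1) * 2 ^ (k + l)"
    by (simp add: power_add algebra_simps)
  finally have cross1: "c * d\<^sub>M \<le> (l + 1) * 2 ^ (k + l)" .
  have "c\<^sub>N * d \<le> (c\<^sub>N * d\<^sub>N) * d\<^sub>M"
    using assms(2) by (metis mult.assoc mult_le_mono2)
  also have "\<dots> \<le> ((k + 1) * 2 ^ k) * 2 ^ l"
    using assms(4,7) by (rule mult_le_mono)
  also have "\<dots> = (k + 1) * 2 ^ (k + l)"
    by (simp add: power_add algebra_simps)
  finally have cross2: "c\<^sub>N * d \<le> (k + 1) * 2 ^ (k + l)" .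
  have cross3: "c\<^sub>N * d\<^sub>M \<le> 2 ^ (k + l)"
    using mult_le_mono[OF assms(6,7)] by (simp add: power_add)
  have "(c + c\<^sub>N) * (d + d\<^sub>M) = c * d + c * d\<^sub>M + c\<^sub>N * d + c\<^sub>N * d\<^sub>M"
    by (simp add: algebra_simps)
  also have "\<dots> \<le> (k + l + 1) * 2 ^ (k + l) + (l + 1) * 2 ^ (k + l)
      + (k + 1) * 2 ^ (k + l) + 2 ^ (k + l)"
    using assms(3) cross1 cross2 cross3 by (intro add_mono)
  also have "\<dots> = (k + l + 2) * 2 ^ (k + l + 1)"
    by (simp add: algebra_simps)
  finally show ?thesis .
qed

theorem card_cliques_mult_card_cocliques_le:
  assumes "finite S"
  shows "card (cliques R S) * card (cliques (\<lambda>u w. \<not> R u w) S) \<le> (card S + 1) * 2 ^ card S"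
  using assms
proof (induction "card S" arbitrary: S rule: less_induct)
  case less
  show ?case
  proof (cases "S = {}")
    case False
    then obtain v where v: "v \<in> S" by blast
    define N where "N = {u \<in> S - {v}. R u v}"
    define M where "M = {u \<in> S - {v}. \<not> R u v}"
    have split: "S - {v} = N \<union> M" "N \<inter> M = {}" and fin: "finite N" "finite M"
      using less.prems by (auto simp: N_def M_def)
    then have card_rest: "card (S - {v}) = card N + card M"
      by (simp add: card_Un_disjoint)
    have card_S: "card S = card N + card M + 1"
      using card_rest card_Suc_Diff1[OF less.prems v] by simp
    have "card (cliques R S) * card (cliques (\<lambda>u w. \<not> R u w) S)
        \<le> (card (cliques R (S - {v})) + card (cliques R N))
          * (card (cliques (\<lambda>u w. \<not> R u w) (S - {v})) + card (cliques (\<lambda>u w. \<not> R u w) M))"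
      using card_cliques_le_remove[OF less.prems, of R v]
        card_cliques_le_remove[OF less.prems, of "\<lambda>u w. \<not> R u w" v]
      by (intro mult_le_mono) (simp_all add: N_def M_def)
    also have "\<dots> \<le> (card N + card M + 2) * 2 ^ (card N + card M + 1)"
    proof (rule clique_count_step)
      show "card (cliques R (S - {v})) \<le> card (cliques R N) * card (cliques R M)"
        "card (cliques (\<lambda>u w. \<not> R u w) (S - {v}))
           \<le> card (cliques (\<lambda>u w. \<not> R u w) N) * card (cliques (\<lambda>u w. \<not> R u w) M)"
        using card_cliques_Un_le fin split by metis+
      show "card (cliques R (S - {v})) * card (cliques (\<lambda>u w. \<not> R u w) (S - {v}))
          \<le> (card N + card M + 1) * 2 ^ (card N + card M)"
        using less.hyps[of "S - {v}"] less.prems card_rest card_S by simp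
      show "card (cliques R N) * card (cliques (\<lambda>u w. \<not> R u w) N) \<le> (card N + 1) * 2 ^ card N"
        "card (cliques R M) * card (cliques (\<lambda>u w. \<not> R u w) M) \<le> (card M + 1) * 2 ^ card M"
        using less.hyps fin card_S by simp_all
      show "card (cliques R N) \<le> 2 ^ card N" "card (cliques (\<lambda>u w. \<not> R u w) M) \<le> 2 ^ card M"
        using card_cliques_le fin by blast+
    qed
    also have "\<dots> = (card S + 1) * 2 ^ card S"
      using card_S by simp
    finally show ?thesis .
  qed simp
qed

lemma is_run_Nil_iff: "is_run A [] qs \<longleftrightarrow> (\<exists>q. qs = [q])"
  by (auto simp: is_run_def length_Suc_conv)

lemma is_run_Cons_iff:
  "is_run A (a # w) qs \<longleftrightarrow> (\<exists>q qs'. qs = q # qs' \<and> (q, a, hd qs') \<in> trans A \<and> is_run A w qs')"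
proof
  assume run: "is_run A (a # w) qs"
  then obtain q qs' where qs: "qs = q # qs'" and len: "length qs' = Suc (length w)"
    by (auto simp: is_run_def length_Suc_conv)
  then have "hd qs' = qs' ! 0"
    by (cases qs') auto
  with run qs len show "\<exists>q qs'. qs = q # qs' \<and> (q, a, hd qs') \<in> trans A \<and> is_run A w qs'"
    by (fastforce simp: is_run_def)
next
  assume "\<exists>q qs'. qs = q # qs' \<and> (q, a, hd qs') \<in> trans A \<and> is_run A w qs'"
  then obtain q qs' where qs: "qs = q # qs'" "(q, a, hd qs') \<in> trans A" "is_run A w qs'"
    by blast
  then have "hd qs' = qs' ! 0"
    by (cases qs') (auto simp: is_run_def)
  with qs show "is_run A (a # w) qs"
    by (auto simp: is_run_def less_Suc_eq_0_disj)
qed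

lemma is_run_nonempty: "is_run A w qs \<Longrightarrow> qs \<noteq> []"
  by (auto simp: is_run_def)

lemma hd_butlast_append: "xs \<noteq> [] \<Longrightarrow> last xs = hd ys \<Longrightarrow> hd (butlast xs @ ys) = hd xs"
  by (cases xs rule: rev_cases) (auto simp: hd_append)

lemma is_run_append:
  assumes "is_run A u xs" and "is_run A v ys" and "last xs = hd ys"
  shows "is_run A (u @ v) (butlast xs @ ys)"
  using assms
proof (induction u arbitrary: xs)
  case Nil
  then show ?case
    by (auto simp: is_run_Nil_iff)
next
  case (Cons a u)
  then obtain x xs' where xs: "xs = x # xs'" "(x, a, hd xs') \<in> trans A" "is_run A u xs'"
    by (auto simp: is_run_Cons_iff)
  moreover have "xs' \<noteq> []" "ys \<noteq> []"
    using is_run_nonempty xs(3) Cons.prems(2) by auto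
  moreover have "hd (butlast xs' @ ys) = hd xs'"
    using Cons.prems(3) xs \<open>xs' \<noteq> []\<close> by (simp add: hd_butlast_append)
  ultimately show ?case
    using Cons by (auto simp: is_run_Cons_iff)
qed

definition reverse_nfa :: "('q, 'a) nfa \<Rightarrow> ('q, 'a) nfa" where
  "reverse_nfa A = \<lparr>states = states A, alphabet = alphabet A,
     trans = {(q', a, q). (q, a, q') \<in> trans A}, init = final A, final = init A\<rparr>"

lemma reverse_nfa_simps [simp]:
  "states (reverse_nfa A) = states A" "alphabet (reverse_nfa A) = alphabet A"
  "init (reverse_nfa A) = final A" "final (reverse_nfa A) = init A"
  by (simp_all add: reverse_nfa_def)

lemma reverse_reverse_nfa [simp]: "reverse_nfa (reverse_nfa A) = A"
  by (simp add: reverse_nfa_def)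

lemma is_run_reverse_nfa:
  assumes "is_run A w qs"
  shows "is_run (reverse_nfa A) (rev w) (rev qs)"
  unfolding is_run_def
proof (intro conjI allI impI)
  show "length (rev qs) = Suc (length (rev w))"
    using assms by (simp add: is_run_def)
next
  fix i assume "i < length (rev w)"
  then have i: "i < length w" by simp
  define j where "j = length w - Suc i"
  have "Suc j = length w - i" "j < length w"
    using i by (simp_all add: j_def)
  then show "(rev qs ! i, rev w ! i, rev qs ! Suc i) \<in> trans (reverse_nfa A)"
    using assms i by (auto simp: is_run_def rev_nth j_def reverse_nfa_def)
qed

lemma accepting_run_reverse_nfa:
  "accepting_run A w qs \<Longrightarrow> accepting_run (reverse_nfa A) (rev w) (rev qs)"
  using is_run_reverse_nfa is_run_nonempty
  by (fastforce simp: accepting_run_def hd_rev last_rev)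

lemma accepting_run_reverse_nfa_iff:
  "accepting_run (reverse_nfa A) w qs \<longleftrightarrow> accepting_run A (rev w) (rev qs)"
  by (metis accepting_run_reverse_nfa reverse_reverse_nfa rev_rev_ident)

lemma wf_nfa_reverse_nfa: "wf_nfa A \<Longrightarrow> wf_nfa (reverse_nfa A)"
  by (auto simp: wf_nfa_def reverse_nfa_def)

lemma ufa_reverse_nfa: "ufa A \<Longrightarrow> ufa (reverse_nfa A)"
  unfolding ufa_def
  by (metis wf_nfa_reverse_nfa accepting_run_reverse_nfa_iff reverse_nfa_simps(2) rev_rev_ident
      set_rev in_lists_conv_set)

lemma lang_reverse_nfa: "lang (reverse_nfa A) = rev ` lang A"
  by (force simp: lang_def accepting_run_reverse_nfa_iff image_iff intro: exI[of _ "rev w" for w])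

definition post :: "('q, 'a) nfa \<Rightarrow> 'q set \<Rightarrow> 'a \<Rightarrow> 'q set" where
  "post A S a = {q'. \<exists>q \<in> S. (q, a, q') \<in> trans A}"

fun fwd_states :: "('q, 'a) nfa \<Rightarrow> 'q set \<Rightarrow> 'a list \<Rightarrow> 'q set" where
  "fwd_states A S [] = S"
| "fwd_states A S (a # w) = fwd_states A (post A S a) w"

lemma fwd_states_append: "fwd_states A S (u @ v) = fwd_states A (fwd_states A S u) v"
  by (induction u arbitrary: S) auto

lemma mem_fwd_states_iff:
  "q \<in> fwd_states A S w \<longleftrightarrow> (\<exists>qs. is_run A w qs \<and> hd qs \<in> S \<and> last qs = q)"
proof (induction w arbitrary: S)
  case Nil
  then show ?case by (auto simp: is_run_Nil_iff)
next
  case (Cons a w)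
  show ?case
  proof
    assume "q \<in> fwd_states A S (a # w)"
    then obtain p qs where "p \<in> S" "(p, a, hd qs) \<in> trans A" "is_run A w qs" "last qs = q"
      using Cons.IH by (auto simp: post_def)
    then show "\<exists>qs. is_run A (a # w) qs \<and> hd qs \<in> S \<and> last qs = q"
      using is_run_nonempty by (intro exI[of _ "p # qs"]) (auto simp: is_run_Cons_iff)
  next
    assume "\<exists>qs. is_run A (a # w) qs \<and> hd qs \<in> S \<and> last qs = q"
    then obtain qs' where run: "is_run A (a # w) qs'" "hd qs' \<in> S" "last qs' = q"
      by blast
    then obtain p qs where "qs' = p # qs" "(p, a, hd qs) \<in> trans A" "is_run A w qs"
      by (auto simp: is_run_Cons_iff)
    moreover have "qs \<noteq> []"
      using is_run_nonempty calculation(3) .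
    ultimately have "hd qs \<in> post A S a" "is_run A w qs" "last qs = q"
      using run by (auto simp: post_def)
    then show "q \<in> fwd_states A S (a # w)"
      using Cons.IH by auto
  qed
qed

lemma fwd_states_subset: "wf_nfa A \<Longrightarrow> S \<subseteq> states A \<Longrightarrow> fwd_states A S w \<subseteq> states A"
proof (induction w arbitrary: S)
  case (Cons a w)
  have "post A S a \<subseteq> states A"
    using Cons.prems by (auto simp: wf_nfa_def post_def)
  with Cons show ?case by simp
qed simp

lemma lang_eq_fwd_states:
  "lang A = {w \<in> lists (alphabet A). fwd_states A (init A) w \<inter> final A \<noteq> {}}"
proof -
  have "(\<exists>qs. accepting_run A w qs) \<longleftrightarrow> fwd_states A (init A) w \<inter> final A \<noteq> {}" for w
    unfolding accepting_run_def ex_in_conv[symmetric] Int_iff mem_fwd_states_iff by blast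
  then show ?thesis
    by (simp add: lang_def)
qed

definition reachable_sets :: "('q, 'a) nfa \<Rightarrow> 'q set set" where
  "reachable_sets A = fwd_states A (init A) ` lists (alphabet A)"

lemma init_in_reachable_sets: "init A \<in> reachable_sets A"
  unfolding reachable_sets_def by (rule image_eqI[of _ _ "[]"]) auto

lemma post_in_reachable_sets:
  assumes "X \<in> reachable_sets A" "a \<in> alphabet A"
  shows "post A X a \<in> reachable_sets A"
proof -
  obtain u where u: "u \<in> lists (alphabet A)" "X = fwd_states A (init A) u"
    using assms(1) by (auto simp: reachable_sets_def)
  then have "post A X a = fwd_states A (init A) (u @ [a])"
    by (simp add: fwd_states_append)
  moreover have "u @ [a] \<in> lists (alphabet A)"
    using u assms(2) by simp
  ultimately show ?thesis
    unfolding reachable_sets_def by (rule image_eqI)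
qed

lemma reachable_sets_subset_Pow:
  assumes "wf_nfa A"
  shows "reachable_sets A \<subseteq> Pow (states A)"
proof -
  have "init A \<subseteq> states A"
    using assms by (simp add: wf_nfa_def)
  then show ?thesis
    using fwd_states_subset[OF assms] by (auto simp: reachable_sets_def)
qed

lemma finite_reachable_sets: "wf_nfa A \<Longrightarrow> finite (reachable_sets A)"
  by (rule finite_subset[OF reachable_sets_subset_Pow]) (simp_all add: wf_nfa_def)

lemma accepting_run_through_state:
  assumes "p \<in> fwd_states A (init A) u" and "p \<in> fwd_states (reverse_nfa A) (final A) v"
  obtains qs where "accepting_run A (u @ rev v) qs" and "qs ! length u = p"
proof -
  obtain xs where xs: "is_run A u xs" "hd xs \<in> init A" "last xs = p"
    using assms(1) by (auto simp: mem_fwd_states_iff)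
  obtain ys where ys: "is_run (reverse_nfa A) v ys" "hd ys \<in> final A" "last ys = p"
    using assms(2) by (auto simp: mem_fwd_states_iff)
  have zs: "is_run A (rev v) (rev ys)" "hd (rev ys) = p" "last (rev ys) \<in> final A" "rev ys \<noteq> []"
    using is_run_reverse_nfa[OF ys(1)] ys is_run_nonempty[OF ys(1)]
    by (simp_all add: hd_rev last_rev)
  have run: "is_run A (u @ rev v) (butlast xs @ rev ys)"
    using is_run_append[OF xs(1) zs(1)] xs(3) zs(2) by simp
  have "length (butlast xs) = length u"
    using xs(1) by (simp add: is_run_def)
  then have "(butlast xs @ rev ys) ! length u = p"
    using zs(2,4) by (simp add: nth_append hd_conv_nth)
  moreover have "hd (butlast xs @ rev ys) \<in> init A"
    using xs zs(2) is_run_nonempty[OF xs(1)] by (simp add: hd_butlast_append)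
  moreover have "last (butlast xs @ rev ys) \<in> final A"
    using zs(3,4) by simp
  ultimately show thesis
    using that run unfolding accepting_run_def by blast
qed

lemma ufa_reachable_sets_inter:
  assumes "ufa A" and "X \<in> reachable_sets A" and "Y \<in> reachable_sets (reverse_nfa A)"
    and "p \<in> X \<inter> Y" and "q \<in> X \<inter> Y"
  shows "p = q"
proof -
  obtain u v where u: "u \<in> lists (alphabet A)" "X = fwd_states A (init A) u"
    and v: "v \<in> lists (alphabet A)" "Y = fwd_states (reverse_nfa A) (final A) v"
    using assms(2,3) by (auto simp: reachable_sets_def)
  obtain ps where ps: "accepting_run A (u @ rev v) ps" "ps ! length u = p"
    using accepting_run_through_state[of p A u v] assms(4) u v by blast
  obtain qs where qs: "accepting_run A (u @ rev v) qs" "qs ! length u = q"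
    using accepting_run_through_state[of q A u v] assms(5) u v by blast
  have "u @ rev v \<in> lists (alphabet A)"
    using u v by auto
  then have "ps = qs"
    using assms(1) ps(1) qs(1) unfolding ufa_def by blast
  then show ?thesis
    using ps qs by simp
qed

definition compl_dfa :: "('q, 'a) nfa \<Rightarrow> ('q set, 'a) nfa" where
  "compl_dfa A = \<lparr>states = reachable_sets A, alphabet = alphabet A,
     trans = {(X, a, post A X a) | X a. X \<in> reachable_sets A \<and> a \<in> alphabet A},
     init = {init A}, final = {X \<in> reachable_sets A. X \<inter> final A = {}}\<rparr>"

fun subset_run :: "('q, 'a) nfa \<Rightarrow> 'q set \<Rightarrow> 'a list \<Rightarrow> 'q set list" where
  "subset_run A S [] = [S]"
| "subset_run A S (a # w) = S # subset_run A (post A S a) w"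

lemma compl_dfa_simps [simp]:
  "states (compl_dfa A) = reachable_sets A" "alphabet (compl_dfa A) = alphabet A"
  "init (compl_dfa A) = {init A}" "final (compl_dfa A) = {X \<in> reachable_sets A. X \<inter> final A = {}}"
  by (simp_all add: compl_dfa_def)

lemma trans_compl_dfa_iff:
  "(X, a, Y) \<in> trans (compl_dfa A) \<longleftrightarrow> X \<in> reachable_sets A \<and> a \<in> alphabet A \<and> Y = post A X a"
  by (auto simp: compl_dfa_def)

lemma hd_subset_run [simp]: "hd (subset_run A S w) = S"
  by (cases w) auto

lemma last_subset_run [simp]: "last (subset_run A S w) = fwd_states A S w"
proof (induction w arbitrary: S)
  case (Cons a w)
  then show ?case
    by (cases w) auto
qed simp

lemma is_run_compl_dfa_imp_subset_run:
  "is_run (compl_dfa A) w qs \<Longrightarrow> qs = subset_run A (hd qs) w"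
proof (induction w arbitrary: qs)
  case (Cons a w)
  then obtain X qs' where qs: "qs = X # qs'" "(X, a, hd qs') \<in> trans (compl_dfa A)"
    "is_run (compl_dfa A) w qs'"
    by (auto simp: is_run_Cons_iff)
  then have "hd qs' = post A X a"
    by (simp add: trans_compl_dfa_iff)
  with qs Cons.IH[OF qs(3)] show ?case
    by simp
qed (auto simp: is_run_Nil_iff)

lemma is_run_compl_dfa_subset_run:
  "w \<in> lists (alphabet A) \<Longrightarrow> S \<in> reachable_sets A \<Longrightarrow> is_run (compl_dfa A) w (subset_run A S w)"
proof (induction w arbitrary: S)
  case (Cons a w)
  then have "is_run (compl_dfa A) w (subset_run A (post A S a) w)"
    by (simp add: post_in_reachable_sets)
  with Cons.prems show ?case
    by (simp add: is_run_Cons_iff trans_compl_dfa_iff)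
qed (simp add: is_run_Nil_iff)

lemma accepting_run_compl_dfa_imp:
  assumes "accepting_run (compl_dfa A) w qs"
  shows "qs = subset_run A (init A) w" and "fwd_states A (init A) w \<inter> final A = {}"
proof -
  show qs: "qs = subset_run A (init A) w"
    using assms is_run_compl_dfa_imp_subset_run by (fastforce simp: accepting_run_def)
  show "fwd_states A (init A) w \<inter> final A = {}"
    using assms by (simp add: accepting_run_def qs)
qed

lemma ufa_compl_dfa:
  assumes "wf_nfa A"
  shows "ufa (compl_dfa A)"
proof -
  have "wf_nfa (compl_dfa A)"
    using assms finite_reachable_sets reachable_sets_subset_Pow init_in_reachable_sets
    by (auto simp: wf_nfa_def trans_compl_dfa_iff post_in_reachable_sets)
  then show ?thesis
    unfolding ufa_def using accepting_run_compl_dfa_imp(1) by blast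
qed

lemma lang_compl_dfa: "lang (compl_dfa A) = lists (alphabet A) - lang A"
proof (intro set_eqI iffI)
  fix w assume "w \<in> lang (compl_dfa A)"
  then obtain qs where w: "w \<in> lists (alphabet A)" and run: "accepting_run (compl_dfa A) w qs"
    by (auto simp: lang_def)
  have "fwd_states A (init A) w \<inter> final A = {}"
    using accepting_run_compl_dfa_imp(2)[OF run] .
  with w show "w \<in> lists (alphabet A) - lang A"
    by (simp add: lang_eq_fwd_states)
next
  fix w assume w: "w \<in> lists (alphabet A) - lang A"
  then have "w \<in> lists (alphabet A)" and disj: "fwd_states A (init A) w \<inter> final A = {}"
    by (simp_all add: lang_eq_fwd_states)
  have "fwd_states A (init A) w \<in> reachable_sets A"
    unfolding reachable_sets_def using \<open>w \<in> lists (alphabet A)\<close> by (rule imageI)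
  moreover have "is_run (compl_dfa A) w (subset_run A (init A) w)"
    using \<open>w \<in> lists (alphabet A)\<close> init_in_reachable_sets by (rule is_run_compl_dfa_subset_run)
  ultimately have "accepting_run (compl_dfa A) w (subset_run A (init A) w)"
    using disj by (simp add: accepting_run_def)
  with \<open>w \<in> lists (alphabet A)\<close> show "w \<in> lang (compl_dfa A)"
    unfolding lang_def by auto
qed

definition map_states :: "('q \<Rightarrow> 'r) \<Rightarrow> ('q, 'a) nfa \<Rightarrow> ('r, 'a) nfa" where
  "map_states f A = \<lparr>states = f ` states A, alphabet = alphabet A,
     trans = (\<lambda>(p, a, q). (f p, a, f q)) ` trans A, init = f ` init A, final = f ` final A\<rparr>"

lemma map_states_simps [simp]:
  "states (map_states f A) = f ` states A" "alphabet (map_states f A) = alphabet A"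
  "init (map_states f A) = f ` init A" "final (map_states f A) = f ` final A"
  by (simp_all add: map_states_def)

lemma trans_map_states_iff:
  "(x, a, y) \<in> trans (map_states f A) \<longleftrightarrow> (\<exists>p q. (p, a, q) \<in> trans A \<and> x = f p \<and> y = f q)"
  by (force simp: map_states_def)

lemma is_run_map_states:
  assumes "is_run A w qs"
  shows "is_run (map_states f A) w (map f qs)"
  using assms by (auto simp: is_run_def trans_map_states_iff)

lemma accepting_run_map_states:
  assumes "accepting_run A w qs"
  shows "accepting_run (map_states f A) w (map f qs)"
proof -
  have "qs \<noteq> []"
    using assms is_run_nonempty by (auto simp: accepting_run_def)
  then show ?thesis
    using assms is_run_map_states[of A w qs f] by (auto simp: accepting_run_def hd_map last_map)
qed

lemma set_accepting_run_map_states: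
  assumes "wf_nfa A" and run: "accepting_run (map_states f A) w qs"
  shows "set qs \<subseteq> f ` states A"
proof
  fix x assume "x \<in> set qs"
  then obtain j where j: "j < length qs" "x = qs ! j"
    by (auto simp: in_set_conv_nth)
  have len: "length qs = Suc (length w)"
    using run by (simp add: accepting_run_def is_run_def)
  show "x \<in> f ` states A"
  proof (cases j)
    case 0
    then have "x \<in> f ` init A"
      using run j by (simp add: accepting_run_def hd_conv_nth flip: length_greater_0_conv)
    then show ?thesis
      using assms(1) by (auto simp: wf_nfa_def)
  next
    case (Suc i)
    then have "(qs ! i, w ! i, x) \<in> trans (map_states f A)"
      using run j len by (simp add: accepting_run_def is_run_def)
    then show ?thesis
      using assms(1) by (auto simp: trans_map_states_iff wf_nfa_def)
  qed
qed

lemma accepting_run_map_states_inv: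
  assumes "wf_nfa A" and "inj_on f (states A)" and run: "accepting_run (map_states f A) w qs"
  defines "g \<equiv> inv_into (states A) f"
  shows "accepting_run A w (map g qs) \<and> qs = map f (map g qs)"
proof -
  have trans_states: "p \<in> states A" "q \<in> states A" if "(p, a, q) \<in> trans A" for p a q
    using assms(1) that by (auto simp: wf_nfa_def)
  have g_f: "g (f p) = p" if "p \<in> states A" for p
    using assms(2) that by (simp add: g_def)
  have "map (f \<circ> g) qs = qs"
    using set_accepting_run_map_states[OF assms(1) run]
    by (intro map_idI) (auto simp: g_def f_inv_into_f)
  then have qs: "qs = map f (map g qs)"
    by simp
  have "is_run A w (map g qs)"
    unfolding is_run_def
  proof (intro conjI allI impI)
    show len: "length (map g qs) = Suc (length w)"
      using run by (simp add: accepting_run_def is_run_def)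
    fix i assume i: "i < length w"
    then obtain p q where "(p, w ! i, q) \<in> trans A" "qs ! i = f p" "qs ! Suc i = f q"
      using run by (auto simp: accepting_run_def is_run_def trans_map_states_iff)
    then show "(map g qs ! i, w ! i, map g qs ! Suc i) \<in> trans A"
      using i len g_f trans_states by simp
  qed
  moreover have "qs \<noteq> []"
    using run is_run_nonempty by (auto simp: accepting_run_def)
  then have "hd (map g qs) \<in> init A" "last (map g qs) \<in> final A"
    using run g_f assms(1) by (auto simp: accepting_run_def hd_map last_map wf_nfa_def)
  ultimately show ?thesis
    using qs by (simp add: accepting_run_def)
qed

lemma ex_ufa_nat_states:
  fixes B :: "('q, 'a) nfa"
  assumes "ufa B"
  obtains B' :: "(nat, 'a) nfa" where "ufa B'" "alphabet B' = alphabet B" "lang B' = lang B"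
    "card (states B') = card (states B)"
proof -
  have wf: "wf_nfa B"
    using assms by (simp add: ufa_def)
  then obtain f :: "'q \<Rightarrow> nat" where f: "inj_on f (states B)"
    using finite_imp_inj_to_nat_seg[of "states B"] by (auto simp: wf_nfa_def)
  note inv = accepting_run_map_states_inv[OF wf f]
  have "wf_nfa (map_states f B)"
    using wf by (fastforce simp: wf_nfa_def trans_map_states_iff)
  moreover have "qs = qs'" if w: "w \<in> lists (alphabet B)"
    and runs: "accepting_run (map_states f B) w qs" "accepting_run (map_states f B) w qs'" for w qs qs'
  proof -
    obtain r r' where "accepting_run B w r" "qs = map f r" "accepting_run B w r'" "qs' = map f r'"
      using inv runs by blast
    with assms w show "qs = qs'"
      unfolding ufa_def by blast
  qed
  ultimately have "ufa (map_states f B)"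
    unfolding ufa_def by simp
  moreover have "lang (map_states f B) = lang B"
  proof -
    have "(\<exists>qs. accepting_run (map_states f B) w qs) \<longleftrightarrow> (\<exists>qs. accepting_run B w qs)" for w
      using inv accepting_run_map_states by metis
    then show ?thesis
      by (simp add: lang_def)
  qed
  moreover have "card (states (map_states f B)) = card (states B)"
    using f by (simp add: card_image)
  ultimately show thesis
    using that by simp
qed

theorem card_reachable_sets_mult_le:
  assumes "ufa A"
  shows "card (reachable_sets A) * card (reachable_sets (reverse_nfa A))
           \<le> (card (states A) + 1) * 2 ^ card (states A)"
proof -
  have wf: "wf_nfa A"
    using assms by (simp add: ufa_def)
  define E where "E u v \<longleftrightarrow> (\<exists>X \<in> reachable_sets A. u \<in> X \<and> v \<in> X)" for u v
  have "reachable_sets A \<subseteq> cliques E (states A)"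
  proof
    fix X assume X: "X \<in> reachable_sets A"
    then have "X \<subseteq> states A"
      using reachable_sets_subset_Pow[OF wf] by blast
    moreover have "E p q" if "p \<in> X" "q \<in> X" for p q
      using X that unfolding E_def by blast
    ultimately show "X \<in> cliques E (states A)"
      by (simp add: cliques_def)
  qed
  moreover have "reachable_sets (reverse_nfa A) \<subseteq> cliques (\<lambda>u v. \<not> E u v) (states A)"
  proof
    fix Y assume Y: "Y \<in> reachable_sets (reverse_nfa A)"
    then have "Y \<subseteq> states A"
      using reachable_sets_subset_Pow[OF wf_nfa_reverse_nfa[OF wf]] by auto
    moreover have "\<not> E p q" if "p \<in> Y" "q \<in> Y" "p \<noteq> q" for p q
      using ufa_reachable_sets_inter[OF assms _ Y] that unfolding E_def by blast
    ultimately show "Y \<in> cliques (\<lambda>u v. \<not> E u v) (states A)"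
      by (simp add: cliques_def)
  qed
  ultimately have "card (reachable_sets A) * card (reachable_sets (reverse_nfa A))
      \<le> card (cliques E (states A)) * card (cliques (\<lambda>u v. \<not> E u v) (states A))"
    using wf by (intro mult_le_mono card_mono finite_cliques) (auto simp: wf_nfa_def)
  also have "\<dots> \<le> (card (states A) + 1) * 2 ^ card (states A)"
    using wf by (intro card_cliques_mult_card_cocliques_le) (simp add: wf_nfa_def)
  finally show ?thesis .
qed

lemma rev_image_lists_diff: "rev ` (lists S - rev ` L) = lists S - L"
proof -
  have rev_image: "rev ` X = {x. rev x \<in> X}" for X :: "'a list set"
    by (rule set_eqI) (metis image_iff mem_Collect_eq rev_rev_ident)
  show ?thesis
    unfolding rev_image by auto
qed

lemma ex_ufa_complement:
  fixes A :: "('q, 'a) nfa"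
  assumes "ufa A"
  obtains B :: "('q set, 'a) nfa" where "ufa B" and "alphabet B = alphabet A"
    and "lang B = lists (alphabet A) - lang A"
    and "card (states B) = min (card (reachable_sets A)) (card (reachable_sets (reverse_nfa A)))"
proof -
  have wf: "wf_nfa A"
    using assms by (simp add: ufa_def)
  show thesis
  proof (cases "card (reachable_sets A) \<le> card (reachable_sets (reverse_nfa A))")
    case True
    show thesis
    proof (rule that)
      show "ufa (compl_dfa A)"
        using wf by (rule ufa_compl_dfa)
    qed (use True in \<open>simp_all add: lang_compl_dfa\<close>)
  next
    case False
    show thesis
    proof (rule that)
      show "ufa (reverse_nfa (compl_dfa (reverse_nfa A)))"
        using wf by (intro ufa_reverse_nfa ufa_compl_dfa wf_nfa_reverse_nfa)
      show "lang (reverse_nfa (compl_dfa (reverse_nfa A))) = lists (alphabet A) - lang A"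
        by (simp add: lang_reverse_nfa lang_compl_dfa rev_image_lists_diff)
    qed (use False in simp_all)
  qed
qed

lemma real_le_sqrt_mult_powr_half:
  fixes k n :: nat
  assumes "k * k \<le> (n + 1) * 2 ^ n"
  shows "real k \<le> sqrt (real n + 1) * 2 powr (real n / 2)"
proof -
  have "real (k * k) \<le> real ((n + 1) * 2 ^ n)"
    using assms by (simp only: of_nat_le_iff)
  then have "(real k)\<^sup>2 \<le> (real n + 1) * 2 ^ n"
    by (simp add: power2_eq_square algebra_simps)
  then have "real k \<le> sqrt ((real n + 1) * 2 ^ n)"
    by (rule real_le_rsqrt)
  also have "\<dots> = sqrt (real n + 1) * 2 powr (real n / 2)"
    by (simp add: real_sqrt_mult powr_half_sqrt_powr powr_realpow flip: powr_realpow)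
  finally show ?thesis .
qed

theorem theorem1:
  fixes A :: "('q, 'a) nfa" and n :: nat and L :: "'a list set"
  assumes "ufa A"
    and "card (states A) = n"
    and "lang A = L"
  shows "\<exists>B :: (nat, 'a) nfa. ufa B \<and> alphabet B = alphabet A
           \<and> real (card (states B)) \<le> sqrt (real n + 1) * 2 powr (real n / 2)
           \<and> lang B = lists (alphabet A) - L"
proof -
  obtain B :: "('q set, 'a) nfa" where B: "ufa B" "alphabet B = alphabet A"
    "lang B = lists (alphabet A) - L"
    and card_B: "card (states B) = min (card (reachable_sets A)) (card (reachable_sets (reverse_nfa A)))"
    using ex_ufa_complement[OF assms(1)] assms(3) by metis
  have "card (states B) * card (states B) \<le> card (reachable_sets A) * card (reachable_sets (reverse_nfa A))"
    unfolding card_B by (intro mult_le_mono) simp_all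
  also have "\<dots> \<le> (n + 1) * 2 ^ n"
    using card_reachable_sets_mult_le[OF assms(1)] assms(2) by simp
  finally have "real (card (states B)) \<le> sqrt (real n + 1) * 2 powr (real n / 2)"
    by (rule real_le_sqrt_mult_powr_half)
  moreover obtain B' :: "(nat, 'a) nfa" where "ufa B'" "alphabet B' = alphabet B" "lang B' = lang B"
    "card (states B') = card (states B)"
    using ex_ufa_nat_states[OF B(1)] by metis
  ultimately show ?thesis
    using B by metis
qed

end
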